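(* For every CZ gate $\mathrm{CZ}$ acting on $n$ qubits and every real $1<r<n$, there exists an operator $\widetilde{\mathrm{CZ}}$ such that $\|\mathrm{CZ}-\widetilde{\mathrm{CZ}}\|\le2^{1-2^{-8}r}$ and $\deg(\widetilde{\mathrm{CZ}})\le\sqrt{nr}$.
   Context: The $n$-qubit CZ gate is $\mathrm{CZ}=I-2|1^n\rangle\langle1^n|$. $\|\cdot\|$ is the spectral norm. Pauli degree: with $P_\sigma=\bigotimes_iP_{\sigma_i}$, $P_0=I,P_1=X,P_2=Y,P_3=Z$, $A=\sum_\sigma\hat A(\sigma)P_\sigma$ and $\deg(A)=\max\{|\{i:\sigma_i\ne0\}|:\hat A(\sigma)\ne0\}$. *)

theory Defs
  imports "Jordan_Normal_Form.Matrix"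
begin

text \<open>n-qubit operators are 2^n x 2^n complex matrices; basis index i < 2^n encodes the
bit string whose k-th bit (qubit k) is (i div 2^k) mod 2.\<close>

definition qbit :: "nat \<Rightarrow> nat \<Rightarrow> nat" where
  "qbit i k = (i div 2 ^ k) mod 2"

text \<open>Single-qubit Paulis P_0 = I, P_1 = X, P_2 = Y, P_3 = Z, entry (a,b) with a,b in {0,1}.\<close>
definition pauli1 :: "nat \<Rightarrow> nat \<Rightarrow> nat \<Rightarrow> complex" where
  "pauli1 s a b =
     (if s = 0 then (if a = b then 1 else 0)
      else if s = 1 then (if a = b then 0 else 1)
      else if s = 2 then (if a = b then 0 else if a = 0 then - \<i> else \<i>)
      else (if a = b then (if a = 0 then 1 else -1) else 0))"

definition pauli_strings :: "nat \<Rightarrow> (nat \<Rightarrow> nat) set" where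
  "pauli_strings n = PiE {..<n} (\<lambda>_. {..<4})"

definition pauli_str :: "nat \<Rightarrow> (nat \<Rightarrow> nat) \<Rightarrow> complex mat" where
  "pauli_str n \<sigma> = mat (2 ^ n) (2 ^ n)
     (\<lambda>(i, j). \<Prod>k<n. pauli1 (\<sigma> k) (qbit i k) (qbit j k))"

definition mat_trace :: "complex mat \<Rightarrow> complex" where
  "mat_trace A = (\<Sum>i<dim_row A. A $$ (i, i))"

text \<open>Pauli coefficient hat A(sigma); A = sum_sigma hat A(sigma) P_sigma.\<close>
definition pauli_coeff :: "nat \<Rightarrow> complex mat \<Rightarrow> (nat \<Rightarrow> nat) \<Rightarrow> complex" where
  "pauli_coeff n A \<sigma> = mat_trace (pauli_str n \<sigma> * A) / 2 ^ n"

definition pauli_weight :: "nat \<Rightarrow> (nat \<Rightarrow> nat) \<Rightarrow> nat" where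
  "pauli_weight n \<sigma> = card {i. i < n \<and> \<sigma> i \<noteq> 0}"

text \<open>Pauli degree (convention: degree of the zero operator is 0).\<close>
definition pauli_deg :: "nat \<Rightarrow> complex mat \<Rightarrow> nat" where
  "pauli_deg n A = Max (insert 0
     (pauli_weight n ` {\<sigma> \<in> pauli_strings n. pauli_coeff n A \<sigma> \<noteq> 0}))"

definition vnorm :: "complex vec \<Rightarrow> real" where
  "vnorm v = sqrt (\<Sum>i<dim_vec v. (cmod (v $ i))\<^sup>2)"

definition spec_norm :: "complex mat \<Rightarrow> real" where
  "spec_norm A = Sup {vnorm (A *\<^sub>v v) | v. v \<in> carrier_vec (dim_col A) \<and> vnorm v \<le> 1}"

text \<open>CZ = I - 2 |1^n><1^n|; the all-ones string is index 2^n - 1.\<close>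
definition CZ :: "nat \<Rightarrow> complex mat" where
  "CZ n = mat (2 ^ n) (2 ^ n)
     (\<lambda>(i, j). if i = j then (if i = 2 ^ n - 1 then -1 else 1) else 0)"

end

(*
  CZ is diagonal with entry 1 - 2 [|i| = n], where |i| is the Hamming weight of the basis
  index i. We replace it by the diagonal operator with entries 1 - 2 Q(n - |i|) for a real
  polynomial Q with Q(0) close to 1 and Q(s) close to 0 for s = 1..n. Such an operator has
  Pauli degree at most deg Q: pairing it with a Pauli string of weight w amounts to taking w
  finite differences of a polynomial in |i|.

  For J = floor(r/256), Q is the product of the polynomial of degree J with Q(0) = 1 vanishing
  at 1..J, which grows like (e s/J)^J, and of powers of rescaled Chebyshev polynomials T_l,
  where T_l(0) = 1, |T_l| <= 1 on [0, n] and |T_l| <= 1/2 beyond (J+1) 4^l. The degree of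
  T_l is about sqrt(n/J) / 2^l, so the degrees form a geometric series summing to
  O(J sqrt(n/J)) = O(sqrt(n r)), while on each block (J+1) 4^l <= s < (J+1) 4^(l+1) the
  Chebyshev factors beat the growth of the first factor and leave an error of 4^(-J).
*)

theory Submission
  imports Defs "HOL-Computational_Algebra.Polynomial"
begin

definition hamming_weight :: "nat \<Rightarrow> nat \<Rightarrow> nat" where
  "hamming_weight n i = (\<Sum>k<n. qbit i k)"

lemma qbit_less_pow: "i < 2 ^ n \<Longrightarrow> qbit i n = 0"
  by (simp add: qbit_def)

lemma qbit_add_pow_top: "i < 2 ^ n \<Longrightarrow> qbit (i + 2 ^ n) n = 1"
  by (simp add: qbit_def)

lemma qbit_add_pow_low:
  assumes "k < n"
  shows "qbit (i + 2 ^ n) k = qbit i k"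
proof -
  have "(2::nat) ^ n = 2 ^ k * 2 ^ (n - k)"
    using assms by (simp flip: power_add)
  then have "(i + 2 ^ n) div 2 ^ k = i div 2 ^ k + 2 ^ (n - k)"
    by simp
  moreover obtain c where "(2::nat) ^ (n - k) = 2 * c"
    using assms by (metis Suc_diff_Suc power_Suc zero_less_diff)
  ultimately show ?thesis
    unfolding qbit_def by simp
qed

lemma hamming_weight_Suc_low: "i < 2 ^ n \<Longrightarrow> hamming_weight (Suc n) i = hamming_weight n i"
  by (simp add: hamming_weight_def qbit_less_pow)

lemma hamming_weight_Suc_high:
  "i < 2 ^ n \<Longrightarrow> hamming_weight (Suc n) (i + 2 ^ n) = hamming_weight n i + 1"
  by (simp add: hamming_weight_def qbit_add_pow_top qbit_add_pow_low)

lemma hamming_weight_le: "hamming_weight n i \<le> n"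
proof -
  have "hamming_weight n i \<le> (\<Sum>k<n. 1)"
    unfolding hamming_weight_def by (rule sum_mono) (simp add: qbit_def)
  then show ?thesis by simp
qed

lemma hamming_weight_eq_iff: "i < 2 ^ n \<Longrightarrow> hamming_weight n i = n \<longleftrightarrow> i = 2 ^ n - 1"
proof (induction n arbitrary: i)
  case 0
  then show ?case by (simp add: hamming_weight_def)
next
  case (Suc n)
  show ?case
  proof (cases "i < 2 ^ n")
    case True
    then show ?thesis
      using hamming_weight_le[of n i] by (simp add: hamming_weight_Suc_low)
  next
    case False
    define j where "j = i - 2 ^ n"
    have "i = j + 2 ^ n" "j < 2 ^ n"
      using False Suc.prems by (auto simp: j_def)
    then show ?thesis
      using Suc.IH[of j] by (auto simp: hamming_weight_Suc_high)
  qed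
qed

lemma sum_lessThan_pow2_Suc:
  fixes f :: "nat \<Rightarrow> 'a::comm_monoid_add"
  shows "(\<Sum>i<2 ^ Suc n. f i) = (\<Sum>i<2 ^ n. f i + f (i + 2 ^ n))"
proof -
  have "(\<Sum>i<m + k. f i) = (\<Sum>i<m. f i) + (\<Sum>i<k. f (i + m))" for m k
    by (induction k) (auto simp: add.commute add.left_commute)
  from this[of "2 ^ n" "2 ^ n"] show ?thesis
    by (simp add: mult_2 sum.distrib)
qed

definition diag_matrix :: "nat \<Rightarrow> (nat \<Rightarrow> complex) \<Rightarrow> complex mat" where
  "diag_matrix N f = mat N N (\<lambda>(i, j). if i = j then f i else 0)"

lemma dim_diag_matrix [simp]:
  "dim_row (diag_matrix N f) = N" "dim_col (diag_matrix N f) = N"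
  by (simp_all add: diag_matrix_def)

lemma mult_diag_matrix_diag:
  assumes "A \<in> carrier_mat N N" and "i < N"
  shows "(A * diag_matrix N f) $$ (i, i) = A $$ (i, i) * f i"
proof -
  have "(A * diag_matrix N f) $$ (i, i) = (\<Sum>j = 0..<N. A $$ (i, j) * (if j = i then f j else 0))"
    using assms by (simp add: index_mult_mat scalar_prod_def diag_matrix_def)
  also have "\<dots> = (\<Sum>j = 0..<N. if j = i then A $$ (i, i) * f i else 0)"
    by (rule sum.cong) auto
  finally show ?thesis
    using assms by simp
qed

lemma diag_matrix_mult_vec:
  assumes "v \<in> carrier_vec N" and "i < N"
  shows "(diag_matrix N f *\<^sub>v v) $ i = f i * v $ i"
proof -
  have "(diag_matrix N f *\<^sub>v v) $ i = (\<Sum>j = 0..<N. (if i = j then f i else 0) * v $ j)"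
    using assms by (simp add: mult_mat_vec_def scalar_prod_def diag_matrix_def)
  also have "\<dots> = (\<Sum>j = 0..<N. if j = i then f i * v $ i else 0)"
    by (rule sum.cong) auto
  finally show ?thesis
    using assms by simp
qed

lemma vnorm_le_scaled:
  assumes "dim_vec w = dim_vec v" and "0 \<le> e"
    and "\<And>i. i < dim_vec v \<Longrightarrow> cmod (w $ i) \<le> e * cmod (v $ i)"
  shows "vnorm w \<le> e * vnorm v"
proof -
  have "(\<Sum>i<dim_vec w. (cmod (w $ i))\<^sup>2) \<le> (\<Sum>i<dim_vec v. (e * cmod (v $ i))\<^sup>2)"
    using assms by (auto intro!: sum_mono power_mono)
  also have "\<dots> = e\<^sup>2 * (\<Sum>i<dim_vec v. (cmod (v $ i))\<^sup>2)"
    by (simp add: power_mult_distrib sum_distrib_left)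
  finally show ?thesis
    using assms(2) unfolding vnorm_def
    by (metis real_sqrt_abs real_sqrt_le_mono real_sqrt_mult abs_of_nonneg)
qed

lemma spec_norm_diag_matrix_le:
  assumes "\<And>i. i < N \<Longrightarrow> cmod (f i) \<le> e" and "0 \<le> e"
  shows "spec_norm (diag_matrix N f) \<le> e"
proof -
  let ?S = "{vnorm (diag_matrix N f *\<^sub>v v) |v.
              v \<in> carrier_vec (dim_col (diag_matrix N f)) \<and> vnorm v \<le> 1}"
  have "0\<^sub>v N \<in> carrier_vec (dim_col (diag_matrix N f))" "vnorm (0\<^sub>v N) \<le> 1"
    by (simp_all add: vnorm_def)
  then have "?S \<noteq> {}"
    by blast
  moreover have "x \<le> e" if "x \<in> ?S" for x
  proof -
    from that obtain v where v: "v \<in> carrier_vec N" "vnorm v \<le> 1"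
      and x: "x = vnorm (diag_matrix N f *\<^sub>v v)"
      by auto
    have "x \<le> e * vnorm v"
      unfolding x
    proof (rule vnorm_le_scaled)
      fix i
      assume "i < dim_vec v"
      with v assms show "cmod ((diag_matrix N f *\<^sub>v v) $ i) \<le> e * cmod (v $ i)"
        by (simp add: diag_matrix_mult_vec norm_mult mult_right_mono del: index_mult_mat_vec)
    qed (use v assms in auto)
    also have "\<dots> \<le> e"
      using v assms(2) by (simp add: mult_left_le)
    finally show ?thesis .
  qed
  ultimately show ?thesis
    unfolding spec_norm_def by (rule cSup_least)
qed

definition pauli_diag :: "nat \<Rightarrow> (nat \<Rightarrow> nat) \<Rightarrow> nat \<Rightarrow> complex" where
  "pauli_diag n \<sigma> i = (\<Prod>k<n. pauli1 (\<sigma> k) (qbit i k) (qbit i k))"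

lemma trace_pauli_str_mult_diag_matrix:
  "mat_trace (pauli_str n \<sigma> * diag_matrix (2 ^ n) f) = (\<Sum>i<2 ^ n. pauli_diag n \<sigma> i * f i)"
proof -
  have P: "pauli_str n \<sigma> \<in> carrier_mat (2 ^ n) (2 ^ n)"
    by (simp add: pauli_str_def)
  have "(pauli_str n \<sigma> * diag_matrix (2 ^ n) f) $$ (i, i) = pauli_diag n \<sigma> i * f i"
    if "i < 2 ^ n" for i
    unfolding mult_diag_matrix_diag[OF P that] using that by (simp add: pauli_str_def pauli_diag_def)
  with P show ?thesis
    unfolding mat_trace_def by simp
qed

lemma pauli_diag_Suc_low:
  "i < 2 ^ n \<Longrightarrow> pauli_diag (Suc n) \<sigma> i = pauli_diag n \<sigma> i * pauli1 (\<sigma> n) 0 0"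
  by (simp add: pauli_diag_def qbit_less_pow)

lemma pauli_diag_Suc_high:
  "i < 2 ^ n \<Longrightarrow> pauli_diag (Suc n) \<sigma> (i + 2 ^ n) = pauli_diag n \<sigma> i * pauli1 (\<sigma> n) 1 1"
  by (simp add: pauli_diag_def qbit_add_pow_top qbit_add_pow_low)

lemma pauli_weight_Suc:
  "pauli_weight (Suc n) \<sigma> = (if \<sigma> n = 0 then pauli_weight n \<sigma> else Suc (pauli_weight n \<sigma>))"
proof -
  have "{k. k < Suc n \<and> \<sigma> k \<noteq> 0} =
      (if \<sigma> n = 0 then {k. k < n \<and> \<sigma> k \<noteq> 0} else insert n {k. k < n \<and> \<sigma> k \<noteq> 0})"
    by (auto simp: less_Suc_eq)
  then show ?thesis
    by (simp add: pauli_weight_def)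
qed

lemma degree_diff_pcompose_shift_less:
  fixes p :: "'a::idom poly"
  assumes "0 < degree p"
  shows "degree (p - p \<circ>\<^sub>p [:1, 1:]) < degree p"
proof -
  let ?q = "p \<circ>\<^sub>p [:1, 1:]"
  have "degree ?q = degree p"
    by (simp add: degree_pcompose)
  moreover have "lead_coeff ?q = lead_coeff p"
    by (simp add: lead_coeff_comp)
  ultimately have "degree (p - ?q) \<le> degree p" "coeff (p - ?q) (degree p) = 0"
    using degree_diff_le[of p "degree p" ?q] by simp_all
  with assms show ?thesis
    by (metis le_neq_implies_less leading_coeff_0_iff degree_0)
qed

abbreviation weight_poly_sum :: "nat \<Rightarrow> (nat \<Rightarrow> nat) \<Rightarrow> real poly \<Rightarrow> complex" where
  "weight_poly_sum n \<sigma> p \<equiv>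
     (\<Sum>i<2 ^ n. pauli_diag n \<sigma> i * of_real (poly p (real (hamming_weight n i))))"

lemma weight_poly_sum_Suc:
  "weight_poly_sum (Suc n) \<sigma> p =
     (\<Sum>i<2 ^ n. pauli_diag n \<sigma> i * (pauli1 (\<sigma> n) 0 0 * of_real (poly p (real (hamming_weight n i)))
        + pauli1 (\<sigma> n) 1 1 * of_real (poly (p \<circ>\<^sub>p [:1, 1:]) (real (hamming_weight n i)))))"
  unfolding sum_lessThan_pow2_Suc
  by (rule sum.cong) (simp_all add: pauli_diag_Suc_low pauli_diag_Suc_high hamming_weight_Suc_low
      hamming_weight_Suc_high poly_pcompose algebra_simps)

(* Splitting off the last qubit, I turns p into p(x) + p(x + 1), X and Y have zero diagonal,
   and Z turns p into the difference p(x) - p(x + 1), of lower degree. *)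
lemma weight_poly_sum_eq_0:
  "degree p < pauli_weight n \<sigma> \<Longrightarrow> weight_poly_sum n \<sigma> p = 0"
proof (induction n arbitrary: p)
  case 0
  then show ?case by (simp add: pauli_weight_def)
next
  case (Suc n)
  consider (I) "\<sigma> n = 0" | (XY) "\<sigma> n = 1 \<or> \<sigma> n = 2"
    | (Z) "\<sigma> n \<noteq> 0" "\<sigma> n \<noteq> 1" "\<sigma> n \<noteq> 2"
    by blast
  then show ?case
  proof cases
    case I
    with Suc.prems have "degree (p + p \<circ>\<^sub>p [:1, 1:]) < pauli_weight n \<sigma>"
      using degree_add_le[of p "degree p" "p \<circ>\<^sub>p [:1, 1:]"]
      by (simp add: pauli_weight_Suc degree_pcompose)
    from Suc.IH[OF this] I show ?thesis
      unfolding weight_poly_sum_Suc by (simp add: pauli1_def algebra_simps)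
  next
    case XY
    then show ?thesis
      unfolding weight_poly_sum_Suc by (auto simp: pauli1_def)
  next
    case Z
    show ?thesis
    proof (cases "0 < degree p")
      case True
      with Suc.prems Z have "degree (p - p \<circ>\<^sub>p [:1, 1:]) < pauli_weight n \<sigma>"
        using degree_diff_pcompose_shift_less[of p] by (simp add: pauli_weight_Suc)
      from Suc.IH[OF this] Z show ?thesis
        unfolding weight_poly_sum_Suc by (simp add: pauli1_def algebra_simps sum_subtractf)
    next
      case False
      then obtain c where "p = [:c:]"
        by (metis degree_eq_zeroE not_gr_zero)
      with Z show ?thesis
        unfolding weight_poly_sum_Suc by (simp add: pauli1_def)
    qed
  qed
qed

definition weight_poly_op :: "nat \<Rightarrow> real poly \<Rightarrow> complex mat" where
  "weight_poly_op n p = diag_matrix (2 ^ n) (\<lambda>i. of_real (poly p (real (hamming_weight n i))))"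

lemma pauli_deg_weight_poly_op_le: "pauli_deg n (weight_poly_op n p) \<le> degree p"
proof -
  have "pauli_weight n \<sigma> \<le> degree p" if "pauli_coeff n (weight_poly_op n p) \<sigma> \<noteq> 0" for \<sigma>
    using that weight_poly_sum_eq_0[of p n \<sigma>]
    by (force simp: pauli_coeff_def weight_poly_op_def trace_pauli_str_mult_diag_matrix)
  moreover have "finite (pauli_strings n)"
    by (simp add: pauli_strings_def finite_PiE)
  ultimately show ?thesis
    unfolding pauli_deg_def by (subst Max_le_iff) auto
qed

lemma CZ_approx_of_poly:
  fixes Q :: "real poly"
  assumes Q0: "\<bar>poly Q 0 - 1\<bar> \<le> e"
    and Qs: "\<And>s::nat. 1 \<le> s \<Longrightarrow> s \<le> n \<Longrightarrow> \<bar>poly Q (real s)\<bar> \<le> e"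
  shows "\<exists>CZt \<in> carrier_mat (2 ^ n) (2 ^ n).
           spec_norm (CZ n - CZt) \<le> 2 * e \<and> pauli_deg n CZt \<le> degree Q"
proof -
  define p where "p = [:1:] - smult 2 (Q \<circ>\<^sub>p [:real n, -1:])"
  define g where "g w = poly Q (real n - real w) - (if w = n then 1 else 0)" for w
  have "CZ n - weight_poly_op n p =
      diag_matrix (2 ^ n) (\<lambda>i. of_real (2 * g (hamming_weight n i)))"
    by (rule eq_matI) (auto simp: CZ_def weight_poly_op_def diag_matrix_def p_def g_def
        poly_pcompose hamming_weight_eq_iff)
  moreover have "\<bar>2 * g w\<bar> \<le> 2 * e" if "w \<le> n" for w
  proof (cases "w = n")
    case True
    with Q0 show ?thesis by (simp add: g_def)
  next
    case False
    with that Qs[of "n - w"] show ?thesis by (simp add: g_def of_nat_diff abs_mult)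
  qed
  ultimately have "spec_norm (CZ n - weight_poly_op n p) \<le> 2 * e"
    using Q0 hamming_weight_le by (auto intro!: spec_norm_diag_matrix_le simp del: of_real_mult)
  moreover have "degree p \<le> degree Q"
    unfolding p_def using degree_diff_le[of "[:1:]" "degree Q" "smult 2 (Q \<circ>\<^sub>p [:real n, -1:])"]
    by (simp add: degree_pcompose)
  ultimately show ?thesis
    using pauli_deg_weight_poly_op_le[of n p] by (fastforce simp: weight_poly_op_def)
qed

fun cheb_poly :: "nat \<Rightarrow> real poly" where
  "cheb_poly 0 = 1"
| "cheb_poly (Suc 0) = [:0, 1:]"
| "cheb_poly (Suc (Suc m)) = [:0, 2:] * cheb_poly (Suc m) - cheb_poly m"

lemma degree_cheb_poly_le: "degree (cheb_poly m) \<le> m"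
proof (induction m rule: cheb_poly.induct)
  case (3 m)
  have "degree ([:0, 2:] * cheb_poly (Suc m)) \<le> Suc (Suc m)"
    using degree_mult_le[of "[:0, 2:]" "cheb_poly (Suc m)"] 3(1) by simp
  with 3(2) show ?case
    using degree_diff_le[of "[:0, 2:] * cheb_poly (Suc m)" "Suc (Suc m)" "cheb_poly m"] by simp
qed auto

lemma poly_cheb_poly_Suc_Suc:
  "poly (cheb_poly (Suc (Suc m))) y = 2 * y * poly (cheb_poly (Suc m)) y - poly (cheb_poly m) y"
  by simp

declare cheb_poly.simps(3) [simp del]

lemma poly_cheb_poly_cos: "poly (cheb_poly m) (cos \<theta>) = cos (real m * \<theta>)"
proof (induction m rule: cheb_poly.induct)
  case (3 m)
  have "cos (real (Suc (Suc m)) * \<theta>) = cos (real (Suc m) * \<theta> + \<theta>)"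
    by (simp add: algebra_simps)
  also have "\<dots> = 2 * cos \<theta> * cos (real (Suc m) * \<theta>) - cos (real (Suc m) * \<theta> - \<theta>)"
    by (simp add: cos_add cos_diff)
  also have "real (Suc m) * \<theta> - \<theta> = real m * \<theta>"
    by (simp add: algebra_simps)
  finally show ?case
    using 3 by (simp only: poly_cheb_poly_Suc_Suc)
qed auto

lemma abs_poly_cheb_poly_le_1: "\<bar>y\<bar> \<le> 1 \<Longrightarrow> \<bar>poly (cheb_poly m) y\<bar> \<le> 1"
  by (metis poly_cheb_poly_cos cos_arccos_abs abs_cos_le_one)

lemma poly_cheb_poly_lower_bounds:
  assumes "1 \<le> y"
  shows "1 + (real m)\<^sup>2 * (y - 1) \<le> poly (cheb_poly m) y
       \<and> (2 * real m + 1) * (y - 1) \<le> poly (cheb_poly (Suc m)) y - poly (cheb_poly m) y"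
proof (induction m)
  case 0
  then show ?case by simp
next
  case (Suc m)
  have "1 + (real (Suc m))\<^sup>2 * (y - 1) = 1 + (real m)\<^sup>2 * (y - 1) + (2 * real m + 1) * (y - 1)"
    by (simp add: algebra_simps power2_eq_square)
  with Suc have lower: "1 + (real (Suc m))\<^sup>2 * (y - 1) \<le> poly (cheb_poly (Suc m)) y"
    by linarith
  moreover have "0 \<le> (real (Suc m))\<^sup>2 * (y - 1)"
    using assms by simp
  ultimately have "1 \<le> poly (cheb_poly (Suc m)) y"
    by linarith
  with assms have "2 * (y - 1) \<le> 2 * (y - 1) * poly (cheb_poly (Suc m)) y"
    using mult_left_mono[of 1 "poly (cheb_poly (Suc m)) y" "2 * (y - 1)"] by simp
  moreover have "poly (cheb_poly (Suc (Suc m))) y - poly (cheb_poly (Suc m)) y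
      = (poly (cheb_poly (Suc m)) y - poly (cheb_poly m) y) + 2 * (y - 1) * poly (cheb_poly (Suc m)) y"
    by (simp only: poly_cheb_poly_Suc_Suc) (simp add: algebra_simps)
  ultimately show ?case
    using Suc lower by (simp add: algebra_simps)
qed

lemma poly_cheb_poly_ge_1:
  assumes "1 \<le> y"
  shows "1 \<le> poly (cheb_poly m) y"
proof -
  have "0 \<le> (real m)\<^sup>2 * (y - 1)"
    using assms by simp
  with poly_cheb_poly_lower_bounds[OF assms, of m] show ?thesis
    by linarith
qed

lemma poly_cheb_poly_mono:
  assumes "1 \<le> y" "y \<le> z"
  shows "poly (cheb_poly m) y \<le> poly (cheb_poly m) z"
proof -
  have "poly (cheb_poly m) y \<le> poly (cheb_poly m) z
      \<and> poly (cheb_poly (Suc m)) y - poly (cheb_poly m) y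
        \<le> poly (cheb_poly (Suc m)) z - poly (cheb_poly m) z"
  proof (induction m)
    case 0
    then show ?case using assms by simp
  next
    case (Suc m)
    then have "poly (cheb_poly (Suc m)) y \<le> poly (cheb_poly (Suc m)) z"
      by linarith
    with assms have "2 * (y - 1) * poly (cheb_poly (Suc m)) y \<le> 2 * (z - 1) * poly (cheb_poly (Suc m)) z"
      using poly_cheb_poly_ge_1[of y "Suc m"] by (intro mult_mono) auto
    with Suc show ?case
      by (simp only: poly_cheb_poly_Suc_Suc) (simp add: algebra_simps)
  qed
  then show ?thesis ..
qed

(* x \<mapsto> 1 + 2 (t - x) / (b - t) maps [t, b] onto [-1, 1], where |T_m| \<le> 1, and 0 to a point
   beyond 1 where T_m \<ge> 2 as soon as m\<^sup>2 \<ge> (b - t) / (2 t). *)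
definition threshold_poly :: "real \<Rightarrow> real \<Rightarrow> nat \<Rightarrow> real poly" where
  "threshold_poly b t m =
     smult (1 / poly (cheb_poly m) (1 + 2 * t / (b - t)))
       (cheb_poly m \<circ>\<^sub>p [:1 + 2 * t / (b - t), - 2 / (b - t):])"

lemma degree_threshold_poly_le: "degree (threshold_poly b t m) \<le> m"
proof -
  have "degree (threshold_poly b t m)
      \<le> degree (cheb_poly m \<circ>\<^sub>p [:1 + 2 * t / (b - t), - 2 / (b - t):])"
    unfolding threshold_poly_def by (rule degree_smult_le)
  also have "\<dots> \<le> degree (cheb_poly m) * degree [:1 + 2 * t / (b - t), - 2 / (b - t):]"
    by (rule degree_pcompose_le)
  also have "\<dots> \<le> m"
    using degree_cheb_poly_le[of m] by (simp add: degree_pCons_eq_if)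
  finally show ?thesis .
qed

lemma poly_threshold_poly:
  "poly (threshold_poly b t m) x =
     poly (cheb_poly m) (1 + 2 * (t - x) / (b - t)) / poly (cheb_poly m) (1 + 2 * t / (b - t))"
proof -
  have "poly [:1 + 2 * t / (b - t), - 2 / (b - t):] x = 1 + 2 * (t - x) / (b - t)"
    by (simp add: diff_divide_distrib algebra_simps)
  then show ?thesis
    unfolding threshold_poly_def poly_smult poly_pcompose by (simp only:) simp
qed

context
  fixes b t :: real and m :: nat
  assumes t_pos: "0 < t" and t_less: "t < b" and m_large: "(b - t) / (2 * t) \<le> (real m)\<^sup>2"
begin

private lemma poly_cheb_poly_image_of_0_ge_2: "2 \<le> poly (cheb_poly m) (1 + 2 * t / (b - t))"
proof -
  define y0 where "y0 = 1 + 2 * t / (b - t)"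
  have "1 \<le> y0"
    using t_pos t_less by (simp add: y0_def)
  moreover have "(b - t) / (2 * t) * (2 * t / (b - t)) = 1"
    using t_pos t_less by simp
  then have "1 \<le> (real m)\<^sup>2 * (y0 - 1)"
    using mult_right_mono[OF m_large, of "2 * t / (b - t)"] t_pos t_less by (simp add: y0_def)
  ultimately show ?thesis
    using poly_cheb_poly_lower_bounds[of y0 m] unfolding y0_def by linarith
qed

lemma poly_threshold_poly_0: "poly (threshold_poly b t m) 0 = 1"
  using poly_cheb_poly_image_of_0_ge_2 t_less by (simp add: poly_threshold_poly)

lemma abs_poly_threshold_poly_le_half:
  assumes "t \<le> x" "x \<le> b"
  shows "\<bar>poly (threshold_poly b t m) x\<bar> \<le> 1 / 2"
proof -
  define y where "y = 1 + 2 * (t - x) / (b - t)"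
  have "\<bar>y\<bar> \<le> 1"
    using assms t_less by (simp add: y_def abs_le_iff field_simps)
  then have "\<bar>poly (cheb_poly m) y\<bar> \<le> 1"
    by (rule abs_poly_cheb_poly_le_1)
  with poly_cheb_poly_image_of_0_ge_2 show ?thesis
    unfolding poly_threshold_poly y_def[symmetric] by (simp add: abs_divide divide_simps)
qed

lemma abs_poly_threshold_poly_le_1:
  assumes "0 \<le> x" "x \<le> b"
  shows "\<bar>poly (threshold_poly b t m) x\<bar> \<le> 1"
proof (cases "x < t")
  case True
  define y where "y = 1 + 2 * (t - x) / (b - t)"
  define y0 where "y0 = 1 + 2 * t / (b - t)"
  have "1 \<le> y" "y \<le> y0"
    using True assms t_less by (simp_all add: y_def y0_def divide_right_mono)
  then have "1 \<le> poly (cheb_poly m) y" "poly (cheb_poly m) y \<le> poly (cheb_poly m) y0"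
    using poly_cheb_poly_ge_1 poly_cheb_poly_mono by blast+
  then show ?thesis
    unfolding poly_threshold_poly y_def[symmetric] y0_def[symmetric] by simp
next
  case False
  then have "t \<le> x"
    by simp
  from abs_poly_threshold_poly_le_half[OF this assms(2)] show ?thesis
    by simp
qed

end

definition root_poly :: "nat \<Rightarrow> real poly" where
  "root_poly J = (\<Prod>i\<in>{1..J}. [:1, -1 / real i:])"

lemma degree_root_poly_le: "degree (root_poly J) \<le> J"
proof -
  have "degree (root_poly J) \<le> sum (degree \<circ> (\<lambda>i. [:1, -1 / real i:])) {1..J}"
    unfolding root_poly_def by (rule degree_prod_sum_le) simp
  also have "\<dots> \<le> (\<Sum>i\<in>{1..J}. 1)"
    by (rule sum_mono) simp
  finally show ?thesis by simp
qed

lemma poly_root_poly_0: "poly (root_poly J) 0 = 1"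
  by (simp add: root_poly_def poly_prod)

lemma poly_root_poly_eq_0: "1 \<le> s \<Longrightarrow> s \<le> J \<Longrightarrow> poly (root_poly J) (real s) = 0"
  unfolding root_poly_def poly_prod by (rule prod_zero) (auto intro!: bexI[of _ s])

lemma power_div_fact_le_exp:
  fixes x :: real
  assumes "0 \<le> x"
  shows "x ^ n / fact n \<le> exp x"
proof -
  have "summable (\<lambda>k. x ^ k /\<^sub>R fact k)"
    using exp_converges sums_summable by blast
  then have "(\<Sum>k\<in>{n}. x ^ k /\<^sub>R fact k) \<le> (\<Sum>k. x ^ k /\<^sub>R fact k)"
    using assms by (intro sum_le_suminf) auto
  then show ?thesis
    by (simp add: exp_def divide_inverse_commute)
qed

lemma abs_poly_root_poly_le:
  assumes "J \<le> s"
  shows "\<bar>poly (root_poly J) (real s)\<bar> \<le> (exp 1 * real s / real J) ^ J"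
proof (cases "J = 0")
  case True
  then show ?thesis by (simp add: root_poly_def)
next
  case False
  have "\<bar>poly (root_poly J) (real s)\<bar> = (\<Prod>i\<in>{1..J}. \<bar>1 - real s / real i\<bar>)"
    by (simp add: root_poly_def poly_prod abs_prod)
  also have "\<dots> \<le> (\<Prod>i\<in>{1..J}. real s / real i)"
    using assms by (intro prod_mono) auto
  also have "\<dots> = (real s / real J) ^ J * (real J ^ J / fact J)"
    using False by (simp add: prod_dividef fact_prod power_divide)
  also have "\<dots> \<le> (real s / real J) ^ J * exp (real J)"
    by (intro mult_left_mono power_div_fact_le_exp) simp_all
  also have "\<dots> = (exp 1 * real s / real J) ^ J"
    using exp_of_nat_mult[of J "1::real"] by (simp add: power_mult_distrib power_divide)
  finally show ?thesis .
qed

definition level_threshold :: "nat \<Rightarrow> nat \<Rightarrow> nat" where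
  "level_threshold J l = (J + 1) * 4 ^ l"

definition num_levels :: "nat \<Rightarrow> nat \<Rightarrow> nat" where
  "num_levels n J = (LEAST l. n < level_threshold J l)"

definition level_degree :: "nat \<Rightarrow> nat \<Rightarrow> nat \<Rightarrow> nat" where
  "level_degree n J l = nat \<lceil>sqrt ((real n + 1 - real (level_threshold J l))
                                   / (2 * real (level_threshold J l)))\<rceil>"

definition level_poly :: "nat \<Rightarrow> nat \<Rightarrow> nat \<Rightarrow> real poly" where
  "level_poly n J l = threshold_poly (real n + 1) (real (level_threshold J l)) (level_degree n J l)"

lemma level_threshold_mono: "l \<le> l' \<Longrightarrow> level_threshold J l \<le> level_threshold J l'"
  unfolding level_threshold_def by (intro mult_le_mono2 power_increasing) auto

lemma level_threshold_pos: "0 < level_threshold J l"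
  by (simp add: level_threshold_def)

lemma less_level_threshold_num_levels: "n < level_threshold J (num_levels n J)"
proof -
  have "n < 4 ^ n"
    using less_exp[of n] power_mono[of "2::nat" 4 n] by linarith
  also have "\<dots> \<le> level_threshold J n"
    by (simp add: level_threshold_def)
  finally show ?thesis
    unfolding num_levels_def by (rule LeastI)
qed

lemma level_threshold_le_if_less_num_levels: "l < num_levels n J \<Longrightarrow> level_threshold J l \<le> n"
  unfolding num_levels_def using not_less_Least by (metis not_less)

lemma num_levels_pos: "J + 1 \<le> n \<Longrightarrow> 0 < num_levels n J"
  using less_level_threshold_num_levels[of n J]
  by (metis gr0I level_threshold_def mult_1_right not_le power_0)

lemma level_bracket:
  assumes "J + 1 \<le> s" "s \<le> n"
  obtains l where "l < num_levels n J" "level_threshold J l \<le> s" "s < level_threshold J (Suc l)"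
proof -
  define l' where "l' = (LEAST l. s < level_threshold J l)"
  have "s < level_threshold J (num_levels n J)"
    using assms(2) less_level_threshold_num_levels[of n J] by simp
  then have "s < level_threshold J l'" "l' \<le> num_levels n J"
    unfolding l'_def by (auto intro: LeastI Least_le)
  moreover have "l' \<noteq> 0"
    using \<open>s < level_threshold J l'\<close> assms(1) by (intro notI) (simp add: level_threshold_def)
  moreover have "level_threshold J (l' - 1) \<le> s"
    using not_less_Least[of "l' - 1" "\<lambda>l. s < level_threshold J l"] \<open>l' \<noteq> 0\<close>
    by (simp add: l'_def)
  ultimately show ?thesis
    using that[of "l' - 1"] by simp
qed

lemma level_degree_large:
  assumes "level_threshold J l \<le> n"
  shows "(real n + 1 - real (level_threshold J l)) / (2 * real (level_threshold J l))
           \<le> (real (level_degree n J l))\<^sup>2"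
proof -
  define X where "X = (real n + 1 - real (level_threshold J l)) / (2 * real (level_threshold J l))"
  have "0 \<le> X"
    using assms by (simp add: X_def)
  moreover have "sqrt X \<le> real (level_degree n J l)"
    unfolding level_degree_def X_def[symmetric] by (rule real_nat_ceiling_ge)
  ultimately show ?thesis
    unfolding X_def[symmetric] using power_mono[of "sqrt X" _ 2] by simp
qed

lemma level_degree_le:
  assumes "level_threshold J l \<le> n"
  shows "real (level_degree n J l) \<le> sqrt (real n / (2 * real (J + 1))) / 2 ^ l + 1"
proof -
  define t where "t = real (level_threshold J l)"
  have t: "1 \<le> t" "t \<le> real n"
    using assms level_threshold_pos[of J l] by (simp_all add: t_def)
  have "(real n + 1 - t) / (2 * t) \<le> real n / (2 * t)"
    using t by (intro divide_right_mono) auto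
  also have "\<dots> = (real n / (2 * real (J + 1))) / (2 ^ l)\<^sup>2"
    by (simp add: t_def level_threshold_def power_mult_distrib[symmetric] power2_eq_square
        algebra_simps)
  finally have "sqrt ((real n + 1 - t) / (2 * t)) \<le> sqrt ((real n / (2 * real (J + 1))) / (2 ^ l)\<^sup>2)"
    by (rule real_sqrt_le_mono)
  also have "\<dots> = sqrt (real n / (2 * real (J + 1))) / 2 ^ l"
    by (simp only: real_sqrt_divide real_sqrt_pow2_iff) simp
  finally have "sqrt ((real n + 1 - t) / (2 * t)) \<le> sqrt (real n / (2 * real (J + 1))) / 2 ^ l" .
  moreover have "real (nat \<lceil>sqrt ((real n + 1 - t) / (2 * t))\<rceil>)
      < sqrt ((real n + 1 - t) / (2 * t)) + 1"
    using t ceiling_correct[of "sqrt ((real n + 1 - t) / (2 * t))"] by simp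
  ultimately show ?thesis
    unfolding level_degree_def t_def[symmetric] by linarith
qed

lemma level_poly_0: "level_threshold J l \<le> n \<Longrightarrow> poly (level_poly n J l) 0 = 1"
  unfolding level_poly_def
  using level_degree_large level_threshold_pos[of J l]
  by (intro poly_threshold_poly_0) auto

lemma abs_poly_level_poly_le_1:
  "level_threshold J l \<le> n \<Longrightarrow> 0 \<le> x \<Longrightarrow> x \<le> real n \<Longrightarrow> \<bar>poly (level_poly n J l) x\<bar> \<le> 1"
  unfolding level_poly_def
  using level_degree_large level_threshold_pos[of J l]
  by (intro abs_poly_threshold_poly_le_1) auto

lemma abs_poly_level_poly_le_half:
  "real (level_threshold J l) \<le> x \<Longrightarrow> x \<le> real n \<Longrightarrow> \<bar>poly (level_poly n J l) x\<bar> \<le> 1 / 2"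
  unfolding level_poly_def
  using level_degree_large level_threshold_pos[of J l]
  by (intro abs_poly_threshold_poly_le_half) auto

(* On (J + 1) 4^l \<le> s < (J + 1) 4^(l + 1) the root factor is at most 2^((2 l + 5) J); the
   5J-th power of level 0 and the 2J-th powers of levels 0..l, each at most 1/2 there, bring
   the product down to 4^(-J). *)
definition delta_poly :: "nat \<Rightarrow> nat \<Rightarrow> real poly" where
  "delta_poly n J = root_poly J * level_poly n J 0 ^ (5 * J)
                      * (\<Prod>l<num_levels n J. level_poly n J l ^ (2 * J))"

lemma poly_delta_poly_0: "J + 1 \<le> n \<Longrightarrow> poly (delta_poly n J) 0 = 1"
  using level_poly_0 level_threshold_le_if_less_num_levels num_levels_pos
  by (simp add: delta_poly_def poly_root_poly_0 poly_prod)

lemma prod_lessThan_le_power_Suc: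
  fixes f :: "nat \<Rightarrow> real"
  assumes "l < N" and "\<And>i. i < N \<Longrightarrow> 0 \<le> f i \<and> f i \<le> 1" and "\<And>i. i \<le> l \<Longrightarrow> f i \<le> c"
  shows "(\<Prod>i<N. f i) \<le> c ^ Suc l"
proof -
  have "(\<Prod>i<N. f i) \<le> (\<Prod>i<N. if i \<le> l then c else 1)"
    using assms by (intro prod_mono) auto
  also have "\<dots> = (\<Prod>i\<in>{..<N} \<inter> {i. i \<le> l}. c) * (\<Prod>i\<in>{..<N} \<inter> - {i. i \<le> l}. 1)"
    by (rule prod.If_cases) simp
  also have "{..<N} \<inter> {i. i \<le> l} = {..l}"
    using assms(1) by auto
  finally show ?thesis
    by simp
qed

lemma abs_poly_root_poly_level_le:
  assumes "1 \<le> J" "J \<le> s" "s < level_threshold J (Suc l)"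
  shows "\<bar>poly (root_poly J) (real s)\<bar> \<le> 2 ^ ((2 * l + 5) * J)"
proof -
  have "real s < real ((J + 1) * 4 ^ Suc l)"
    using assms(3) by (simp only: level_threshold_def of_nat_less_iff)
  also have "\<dots> \<le> 2 * real J * 4 ^ Suc l"
    using assms(1) by simp
  finally have "real s / real J \<le> 2 * 4 ^ Suc l"
    using assms(1) by (simp add: field_simps)
  then have "exp 1 * (real s / real J) \<le> 4 * (2 * 4 ^ Suc l)"
    using exp_le by (intro mult_mono) auto
  also have "\<dots> = 2 ^ (2 * l + 5)"
    by (simp add: power_mult power_add)
  finally have "(exp 1 * real s / real J) ^ J \<le> (2 ^ (2 * l + 5)) ^ J"
    by (intro power_mono) auto
  with abs_poly_root_poly_le[OF assms(2)] show ?thesis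
    by (simp add: power_mult)
qed

lemma abs_poly_delta_poly_le:
  assumes "1 \<le> J" "J + 1 \<le> n" "1 \<le> s" "s \<le> n"
  shows "\<bar>poly (delta_poly n J) (real s)\<bar> \<le> (1 / 2) ^ (2 * J)"
proof (cases "s \<le> J")
  case True
  then show ?thesis
    using assms(3) by (simp add: delta_poly_def poly_root_poly_eq_0)
next
  case False
  define N where "N = num_levels n J"
  define f where "f i = \<bar>poly (level_poly n J i) (real s)\<bar>" for i
  obtain l where l: "l < N" "level_threshold J l \<le> s" "s < level_threshold J (Suc l)"
    using level_bracket[of J s n] False assms(4) unfolding N_def by auto
  have root: "\<bar>poly (root_poly J) (real s)\<bar> \<le> 2 ^ ((2 * l + 5) * J)"
    using abs_poly_root_poly_level_le[of J s l] assms(1) False l(3) by simp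
  have level_0: "f 0 ^ (5 * J) \<le> (1 / 2) ^ (5 * J)"
    using False assms(4) abs_poly_level_poly_le_half[of J 0 "real s" n]
    by (intro power_mono) (auto simp: f_def level_threshold_def)
  have levels: "(\<Prod>i<N. f i ^ (2 * J)) \<le> ((1 / 2) ^ (2 * J)) ^ Suc l"
  proof (rule prod_lessThan_le_power_Suc[OF l(1)])
    show "0 \<le> f i ^ (2 * J) \<and> f i ^ (2 * J) \<le> 1" if "i < N" for i
      using that assms(4) abs_poly_level_poly_le_1 level_threshold_le_if_less_num_levels
      by (auto simp: f_def N_def power_le_one)
    show "f i ^ (2 * J) \<le> (1 / 2) ^ (2 * J)" if "i \<le> l" for i
      using that l(2) assms(4) level_threshold_mono[OF that, of J] abs_poly_level_poly_le_half
      by (intro power_mono) (auto simp: f_def)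
  qed
  have "\<bar>poly (delta_poly n J) (real s)\<bar> =
      \<bar>poly (root_poly J) (real s)\<bar> * f 0 ^ (5 * J) * (\<Prod>i<N. f i ^ (2 * J))"
    by (simp add: delta_poly_def f_def N_def poly_prod abs_mult abs_prod power_abs)
  also have "\<dots> \<le> 2 ^ ((2 * l + 5) * J) * (1 / 2) ^ (5 * J) * ((1 / 2) ^ (2 * J)) ^ Suc l"
    using root level_0 levels by (intro mult_mono) (auto simp: f_def intro!: prod_nonneg)
  also have "\<dots> = (1 / 2) ^ (2 * J)"
  proof -
    have "5 * J + 2 * J * Suc l = (2 * l + 5) * J + 2 * J"
      by (simp add: algebra_simps)
    then have "(1 / 2 :: real) ^ (5 * J) * ((1 / 2) ^ (2 * J)) ^ Suc l
        = (1 / 2) ^ ((2 * l + 5) * J) * (1 / 2) ^ (2 * J)"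
      by (simp only: power_mult[symmetric] power_add[symmetric])
    moreover have "(2 :: real) ^ k * (1 / 2) ^ k = 1" for k
      by (simp add: power_mult_distrib[symmetric])
    ultimately show ?thesis
      by (metis mult.assoc mult_1)
  qed
  finally show ?thesis .
qed

lemma degree_delta_poly_le_sum:
  "degree (delta_poly n J)
     \<le> J + 5 * J * level_degree n J 0 + (\<Sum>l<num_levels n J. 2 * J * level_degree n J l)"
proof -
  have level_pow: "degree (level_poly n J l ^ k) \<le> k * level_degree n J l" for l k
    using degree_power_le[of "level_poly n J l" k] degree_threshold_poly_le
    by (metis level_poly_def mult.commute mult_le_mono1 order_trans)
  have "degree (\<Prod>l<num_levels n J. level_poly n J l ^ (2 * J))
      \<le> sum (degree \<circ> (\<lambda>l. level_poly n J l ^ (2 * J))) {..<num_levels n J}"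
    by (rule degree_prod_sum_le) simp
  also have "\<dots> \<le> (\<Sum>l<num_levels n J. 2 * J * level_degree n J l)"
    by (rule sum_mono) (simp add: level_pow)
  finally show ?thesis
    unfolding delta_poly_def
    using degree_mult_le[of "root_poly J * level_poly n J 0 ^ (5 * J)"
        "\<Prod>l<num_levels n J. level_poly n J l ^ (2 * J)"]
      degree_mult_le[of "root_poly J" "level_poly n J 0 ^ (5 * J)"]
      degree_root_poly_le[of J] level_pow[of 0 "5 * J"]
    by linarith
qed

lemma sum_level_degree_le:
  assumes "J + 1 \<le> n"
  shows "(\<Sum>l<num_levels n J. real (level_degree n J l))
           \<le> 2 * sqrt (real n / (2 * real (J + 1))) + real (num_levels n J)"
proof -
  define A where "A = sqrt (real n / (2 * real (J + 1)))"
  have "real (level_degree n J l) \<le> A * (1 / 2) ^ l + 1" if "l < num_levels n J" for l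
    using level_degree_le[OF level_threshold_le_if_less_num_levels[OF that]]
    by (simp add: A_def power_one_over)
  then have "(\<Sum>l<num_levels n J. real (level_degree n J l))
      \<le> (\<Sum>l<num_levels n J. A * (1 / 2) ^ l + 1)"
    by (intro sum_mono) simp
  also have "\<dots> = A * (\<Sum>l<num_levels n J. (1 / 2) ^ l) + real (num_levels n J)"
    by (simp add: sum.distrib sum_distrib_left)
  finally have "(\<Sum>l<num_levels n J. real (level_degree n J l))
      \<le> A * (\<Sum>l<num_levels n J. (1 / 2) ^ l) + real (num_levels n J)" .
  moreover have "(\<Sum>l<k. (1 / 2 :: real) ^ l) = 2 - 2 * (1 / 2) ^ k" for k
    by (induction k) simp_all
  then have "A * (\<Sum>l<num_levels n J. (1 / 2) ^ l) \<le> A * 2"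
    by (intro mult_left_mono) (simp_all add: A_def)
  ultimately show ?thesis
    unfolding A_def by linarith
qed

lemma num_levels_le:
  assumes "J + 1 \<le> n"
  shows "6 + 2 * real (num_levels n J) \<le> 8 * sqrt (real n / real (J + 1))"
proof -
  define m where "m = num_levels n J - 1"
  have N: "num_levels n J = Suc m"
    using num_levels_pos[OF assms] by (simp add: m_def)
  have "real ((J + 1) * 4 ^ m) \<le> real n"
    using level_threshold_le_if_less_num_levels[of m n J] N
    by (simp only: level_threshold_def of_nat_le_iff)
  then have "(2 ^ m)\<^sup>2 \<le> real n / real (J + 1)"
    by (simp add: field_simps power_mult_distrib[symmetric] power2_eq_square)
  then have "2 ^ m \<le> sqrt (real n / real (J + 1))"
    by (simp add: real_le_rsqrt)
  moreover have "6 + 2 * real (Suc m) \<le> 8 * 2 ^ m"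
  proof -
    have "real (Suc m) \<le> 2 ^ m"
      by (metis Suc_leI less_exp of_nat_le_iff of_nat_numeral of_nat_power)
    then show ?thesis
      using one_le_power[of "2::real" m] by simp
  qed
  ultimately show ?thesis
    unfolding N by linarith
qed

lemma degree_delta_poly_le:
  assumes "1 \<le> J" "J + 1 \<le> n"
  shows "real (degree (delta_poly n J)) \<le> 15 * real J * sqrt (real n / real (J + 1))"
proof -
  define A where "A = sqrt (real n / (2 * real (J + 1)))"
  define B where "B = sqrt (real n / real (J + 1))"
  define N where "N = num_levels n J"
  have "9 * A \<le> 7 * B"
  proof -
    have "(9 * A)\<^sup>2 \<le> (7 * B)\<^sup>2"
      by (simp add: A_def B_def power_mult_distrib field_simps)
    then show ?thesis
      by (rule power2_le_imp_le) (simp add: B_def)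
  qed
  have "real (degree (delta_poly n J))
      \<le> real (J + 5 * J * level_degree n J 0 + (\<Sum>l<N. 2 * J * level_degree n J l))"
    using degree_delta_poly_le_sum[of n J] unfolding N_def by (simp only: of_nat_le_iff)
  also have "\<dots> = real J + 5 * real J * real (level_degree n J 0)
      + 2 * real J * (\<Sum>l<N. real (level_degree n J l))"
    by (simp add: sum_distrib_left)
  also have "\<dots> \<le> real J + 5 * real J * (A + 1) + 2 * real J * (2 * A + real N)"
    using level_degree_le[of J 0 n] level_threshold_le_if_less_num_levels[of 0 n J]
      num_levels_pos[OF assms(2)] sum_level_degree_le[OF assms(2)]
    by (intro add_mono mult_left_mono) (auto simp: A_def N_def)
  also have "\<dots> = real J * (9 * A) + real J * (6 + 2 * real N)"
    by (simp add: algebra_simps)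
  also have "\<dots> \<le> real J * (7 * B) + real J * (8 * B)"
    using \<open>9 * A \<le> 7 * B\<close> num_levels_le[OF assms(2)]
    by (intro add_mono mult_left_mono) (simp_all add: B_def N_def)
  finally show ?thesis
    by (simp add: B_def algebra_simps)
qed

lemma CZ_approx_delta_poly:
  assumes "1 \<le> J" "J + 1 \<le> n"
  shows "\<exists>CZt \<in> carrier_mat (2 ^ n) (2 ^ n). spec_norm (CZ n - CZt) \<le> 2 * (1 / 2) ^ (2 * J)
           \<and> real (pauli_deg n CZt) \<le> 15 * real J * sqrt (real n / real (J + 1))"
proof -
  have "\<exists>CZt \<in> carrier_mat (2 ^ n) (2 ^ n). spec_norm (CZ n - CZt) \<le> 2 * (1 / 2) ^ (2 * J)
           \<and> pauli_deg n CZt \<le> degree (delta_poly n J)"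
    using poly_delta_poly_0[OF assms(2)] abs_poly_delta_poly_le[OF assms]
    by (intro CZ_approx_of_poly) auto
  with degree_delta_poly_le[OF assms] show ?thesis
    by (meson of_nat_le_iff order_trans)
qed

lemma two_mult_half_power_le_two_powr:
  assumes "1 \<le> J" "x < real J + 1"
  shows "2 * (1 / 2) ^ (2 * J) \<le> 2 powr (1 - x)"
proof -
  have "(2::real) powr real (2 * J) = 2 ^ (2 * J)"
    by (rule powr_realpow) simp
  then have "2 * (1 / 2) ^ (2 * J) = 2 powr (1 - real (2 * J))"
    unfolding powr_diff by (simp add: power_one_over)
  also have "\<dots> \<le> 2 powr (1 - x)"
    using assms by (intro powr_mono) auto
  finally show ?thesis .
qed

lemma mult_sqrt_div_Suc_le_sqrt:
  assumes "real J \<le> r / 256"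
  shows "15 * real J * sqrt (real n / real (J + 1)) \<le> sqrt (real n * r)"
proof (rule real_le_rsqrt)
  have "(real J)\<^sup>2 / real (J + 1) \<le> real J"
    by (simp add: divide_le_eq power2_eq_square algebra_simps)
  then have "(real J)\<^sup>2 * (real n / real (J + 1)) \<le> real n * real J"
    using mult_left_mono[of "(real J)\<^sup>2 / real (J + 1)" "real J" "real n"] by (simp add: algebra_simps)
  then have "(15 * real J * sqrt (real n / real (J + 1)))\<^sup>2 \<le> 225 * (real n * real J)"
    by (simp add: power_mult_distrib)
  also have "\<dots> \<le> real n * r"
  proof -
    have "real n * real J \<le> real n * (r / 256)"
      by (rule mult_left_mono[OF assms]) simp
    moreover have "0 \<le> real n * real J"
      by simp
    ultimately show ?thesis
      by linarith
  qed
  finally show "(15 * real J * sqrt (real n / real (J + 1)))\<^sup>2 \<le> real n * r" .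
qed

(* The approximant built from Q = 1/2 is the zero operator. *)
lemma CZ_approx_small_r:
  assumes "0 \<le> r" "r \<le> 256"
  shows "\<exists>CZt \<in> carrier_mat (2 ^ n) (2 ^ n).
           spec_norm (CZ n - CZt) \<le> 2 powr (1 - r / 256) \<and> real (pauli_deg n CZt) \<le> sqrt (real n * r)"
proof -
  obtain CZt where CZt: "CZt \<in> carrier_mat (2 ^ n) (2 ^ n)" "spec_norm (CZ n - CZt) \<le> 1"
      "pauli_deg n CZt = 0"
    using CZ_approx_of_poly[of "[:1 / 2:]" "1 / 2" n] by auto
  have "1 \<le> 2 powr (1 - r / 256)"
    using assms(2) by (intro ge_one_powr_ge_zero) simp_all
  with CZt assms(1) show ?thesis
    by (intro bexI[of _ CZt]) auto
qed

lemma CZ_approx_large_r: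
  assumes "256 < r" "r < real n"
  shows "\<exists>CZt \<in> carrier_mat (2 ^ n) (2 ^ n).
           spec_norm (CZ n - CZt) \<le> 2 powr (1 - r / 256) \<and> real (pauli_deg n CZt) \<le> sqrt (real n * r)"
proof -
  define k where "k = r / 256"
  define J where "J = nat \<lfloor>k\<rfloor>"
  have "1 < k"
    using assms(1) by (simp add: k_def)
  then have J1: "1 \<le> J" and Jk: "real J \<le> k" "k < real J + 1"
    unfolding J_def by (simp_all add: le_nat_iff)
  with assms(2) have "J + 1 \<le> n"
    unfolding k_def by linarith
  with J1 obtain CZt where CZt: "CZt \<in> carrier_mat (2 ^ n) (2 ^ n)"
      "spec_norm (CZ n - CZt) \<le> 2 * (1 / 2) ^ (2 * J)"
      "real (pauli_deg n CZt) \<le> 15 * real J * sqrt (real n / real (J + 1))"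
    using CZ_approx_delta_poly by blast
  have "spec_norm (CZ n - CZt) \<le> 2 powr (1 - r / 256)"
    using CZt(2) two_mult_half_power_le_two_powr[OF J1 Jk(2)] unfolding k_def by (rule order_trans)
  moreover have "real (pauli_deg n CZt) \<le> sqrt (real n * r)"
    using CZt(3) mult_sqrt_div_Suc_le_sqrt[of J r n] Jk(1) unfolding k_def by linarith
  ultimately show ?thesis
    using CZt(1) by blast
qed

theorem corollary3p3:
  fixes n :: nat and r :: real
  assumes "1 < r" and "r < real n"
  shows "\<exists>CZt \<in> carrier_mat (2 ^ n) (2 ^ n).
           spec_norm (CZ n - CZt) \<le> 2 powr (1 - 2 powr (-8) * r)
         \<and> real (pauli_deg n CZt) \<le> sqrt (real n * r)"
proof -
  have k: "2 powr (-8) * r = r / 256"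
    by (simp add: powr_minus_divide)
  show ?thesis
    unfolding k using CZ_approx_small_r[of r n] CZ_approx_large_r[of r n] assms
    by (cases "r \<le> 256") simp_all
qed

end
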